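(* Let $P$ be the program with a single integer-valued program variable $n$ and no random variables: $n:=1$; while $n\ge1$ do if prob($\tfrac12$) then $n:=n+1$ else $n:=n-1$; $n:=n-1$ fi od. Then $P$ terminates almost surely and its expected termination time $\mathsf{ET}(P)$ (the expected value of $T$ in its stochastic game structure $\mathcal{G}_P$; there are no schedulers since there is no nondeterminism) is an irrational number.
   Context: The stochastic game structure $\mathcal{G}_P$ is built inductively: an assignment $x:=e$ gives two deterministic locations $\ell^{in},\ell^{out}$ and one transition $\ell^{in}\to\ell^{out}$ performing the update; a sequence $Q_1;Q_2$ identifies $\ell^{out}_{Q_1}$ with $\ell^{in}_{Q_2}$; a loop "while $\phi$ do $Q$ od" adds a deterministic location $\ell^{in}$ identified with $\ell^{out}_Q$, a new location $\ell^{out}$, and identity transitions $\ell^{in}\to\ell^{in}_Q$ with guard $\phi$ and $\ell^{in}\to\ell^{out}$ with guard $\neg\phi$; "if prob($p$) then $Q_1$ else $Q_2$ fi" adds a probabilistic location $\ell^{in}$ with identity transitions to $\ell^{in}_{Q_1}$ (probability $p$) and $\ell^{in}_{Q_2}$ (probability $1-p$), and identifies $\ell^{out}_{Q_1},\ell^{out}_{Q_2}$ with the statement's $\ell^{out}$. The program's final $\ell^{out}$ is the terminal location $\ell_{out}$ (with a self-loop). A run $c_1c_2\cdots$ starts at $c_1$ = (initial location, initial valuation) and each step follows one transition; $T=\min\{n:\text{the location of }c_n\text{ is }\ell_{out}\}$. *)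

theory Defs
  imports "HOL-Probability.Probability"
begin

text \<open>Stochastic game structure G_P of the program
  n:=1; while n>=1 do if prob(1/2) then n:=n+1 else n:=n-1; n:=n-1 fi od
  built by the inductive construction:
  L0 = in of (n:=1); L1 = out of (n:=1) = in of while = out of loop body;
  L2 = probabilistic in of the if; L3 = in of (n:=n+1) (out = L1);
  L4 = in of (n:=n-1), L5 = its out = in of second (n:=n-1) (out = L1);
  Lout = out of while = terminal location (self-loop).
  All locations other than L2 are deterministic; there is no nondeterminism,
  hence no scheduler.\<close>

datatype loc = L0 | L1 | L2 | L3 | L4 | L5 | Lout

type_synonym conf = "loc \<times> int"

fun step :: "conf \<Rightarrow> conf pmf" where
  "step (L0, n) = return_pmf (L1, 1)"
| "step (L1, n) = (if n \<ge> 1 then return_pmf (L2, n) else return_pmf (Lout, n))"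
| "step (L2, n) = map_pmf (\<lambda>b. if b then (L3, n) else (L4, n)) (bernoulli_pmf (1/2))"
| "step (L3, n) = return_pmf (L1, n + 1)"
| "step (L4, n) = return_pmf (L5, n - 1)"
| "step (L5, n) = return_pmf (L1, n - 1)"
| "step (Lout, n) = return_pmf (Lout, n)"

fun run_prefix :: "int \<Rightarrow> nat \<Rightarrow> conf list pmf" where
  "run_prefix n0 0 = return_pmf [(L0, n0)]"
| "run_prefix n0 (Suc k) =
     bind_pmf (run_prefix n0 k) (\<lambda>xs. map_pmf (\<lambda>c. xs @ [c]) (step (last xs)))"

text \<open>P(T = k+1), where T = min {n. location of c_n is Lout}.\<close>
definition T_prob :: "int \<Rightarrow> nat \<Rightarrow> real" where
  "T_prob n0 k = measure_pmf.prob (run_prefix n0 k)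
     {xs. fst (xs ! k) = Lout \<and> (\<forall>i<k. fst (xs ! i) \<noteq> Lout)}"

definition terminates_as :: "int \<Rightarrow> bool" where
  "terminates_as n0 \<longleftrightarrow> (\<Sum>k. ennreal (T_prob n0 k)) = 1"

text \<open>Expected termination time E[T], with T taking values in N \<union> {infinity}.\<close>
definition ET :: "int \<Rightarrow> ennreal" where
  "ET n0 = (\<Sum>k. ennreal (real (Suc k) * T_prob n0 k))
           + \<top> * (1 - (\<Sum>k. ennreal (T_prob n0 k)))"

end

theory Submission
  imports Defs "HOL-Computational_Algebra.Primes" "HOL-Real_Asymp.Real_Asymp"
begin

text \<open>Let \<open>alive\<close> be the indicator of not having terminated and \<open>remaining_time\<close> the expected
  number of further non-terminal configurations. They satisfy the one-step equations
  \<open>alive = [the next step terminates] + E alive\<close> and \<open>remaining_time = E (alive + remaining_time)\<close>,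
  which telescope along the run: \<open>\<Sum>k<N. P(T = k + 2)\<close> and \<open>\<Sum>k<N. (k + 2) P(T = k + 2)\<close>
  equal \<open>1\<close> and \<open>2 + remaining_time c\<^sub>1\<close> up to remainders built from the expectations of
  \<open>alive\<close> and \<open>remaining_time\<close> at time \<open>N\<close>. A Lyapunov function dominating both and
  contracting by \<open>99/100\<close> per step makes these remainders \<open>O(N (99/100)\<^sup>N)\<close>. Hence \<open>T\<close> is
  finite almost surely and \<open>E T = 2 + remaining_time (L0, n0) = (13 + 7 \<surd>5) / 2\<close>, which is
  irrational because \<open>\<surd>5\<close> is.\<close>

section \<open>Telescoping series in \<open>ennreal\<close>\<close>

lemma sum_telescope_ennreal:
  fixes F G :: "nat \<Rightarrow> ennreal"
  assumes "\<And>j. G j = F j + G (Suc j)"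
  shows "(\<Sum>j<N. F j) + G N = G 0"
proof (induction N)
  case (Suc N)
  then show ?case using assms[of N] by (simp add: add.assoc)
qed simp

lemma weighted_sum_telescope_ennreal:
  fixes F G H :: "nat \<Rightarrow> ennreal"
  assumes G: "\<And>j. G j = F j + G (Suc j)" and H: "\<And>j. H j = G (Suc j) + H (Suc j)"
  shows "(\<Sum>j<N. (of_nat j + a) * F j) + ((of_nat N + a) * G N + H N) = a * G 0 + H 0"
proof (induction N)
  case (Suc N)
  have "(of_nat N + a) * F N + ((of_nat (Suc N) + a) * G (Suc N) + H (Suc N))
      = (of_nat N + a) * (F N + G (Suc N)) + (G (Suc N) + H (Suc N))"
    by (simp add: algebra_simps)
  also have "\<dots> = (of_nat N + a) * G N + H N"
    using G[of N] H[of N] by simp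
  finally show ?case using Suc.IH by (simp add: add.assoc)
qed simp

lemma suminf_eq_if_remainder_tendsto_0:
  fixes g e :: "nat \<Rightarrow> ennreal"
  assumes "\<And>N. (\<Sum>k<N. g k) + e N = K" and "e \<longlonglongrightarrow> 0"
  shows "suminf g = K"
proof -
  have "(\<lambda>N. (\<Sum>k<N. g k) + e N) \<longlonglongrightarrow> suminf g + 0"
    by (intro tendsto_add summable_LIMSEQ assms(2)) simp
  then have "(\<lambda>N. K) \<longlonglongrightarrow> suminf g"
    using assms(1) by simp
  then show ?thesis
    by (rule LIMSEQ_unique[OF tendsto_const, symmetric])
qed

lemma tendsto_0_if_le_ennreal:
  fixes f :: "nat \<Rightarrow> ennreal"
  assumes "\<And>N. f N \<le> ennreal (g N)" and "g \<longlonglongrightarrow> 0"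
  shows "f \<longlonglongrightarrow> 0"
proof (rule tendsto_sandwich[OF _ _ tendsto_const])
  show "(\<lambda>N. ennreal (g N)) \<longlonglongrightarrow> 0"
    using tendsto_ennrealI[OF assms(2)] by simp
qed (use assms(1) in auto)

section \<open>Expectations along a Markov chain\<close>

lemma nn_integral_chain_telescope:
  assumes M: "\<And>k. M (Suc k) = bind_pmf (M k) K"
    and g: "\<And>c. g c = f c + (\<integral>\<^sup>+x. g x \<partial>K c)"
  shows "(\<integral>\<^sup>+x. g x \<partial>M k) = (\<integral>\<^sup>+x. f x \<partial>M k) + (\<integral>\<^sup>+x. g x \<partial>M (Suc k))"
proof -
  have "(\<integral>\<^sup>+x. g x \<partial>M k) = (\<integral>\<^sup>+c. f c + (\<integral>\<^sup>+x. g x \<partial>K c) \<partial>M k)"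
    by (subst g) rule
  also have "\<dots> = (\<integral>\<^sup>+x. f x \<partial>M k) + (\<integral>\<^sup>+c. (\<integral>\<^sup>+x. g x \<partial>K c) \<partial>M k)"
    by (rule nn_integral_add) simp_all
  finally show ?thesis
    by (simp add: M)
qed

lemma nn_integral_chain_geometric_decay:
  assumes M: "\<And>k. M (Suc k) = bind_pmf (M k) K"
    and W: "\<And>c. (\<integral>\<^sup>+x. W x \<partial>K c) \<le> \<theta> * W c"
  shows "(\<integral>\<^sup>+x. W x \<partial>M k) \<le> \<theta> ^ k * (\<integral>\<^sup>+x. W x \<partial>M 0)"
proof (induction k)
  case (Suc k)
  have "(\<integral>\<^sup>+x. W x \<partial>M (Suc k)) = (\<integral>\<^sup>+c. (\<integral>\<^sup>+x. W x \<partial>K c) \<partial>M k)"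
    by (simp add: M)
  also have "\<dots> \<le> (\<integral>\<^sup>+c. \<theta> * W c \<partial>M k)"
    by (intro nn_integral_mono W)
  also have "\<dots> = \<theta> * (\<integral>\<^sup>+c. W c \<partial>M k)"
    by (rule nn_integral_cmult) simp
  also have "\<dots> \<le> \<theta> ^ Suc k * (\<integral>\<^sup>+x. W x \<partial>M 0)"
    using mult_left_mono[OF Suc.IH, of \<theta>] by (simp add: mult.assoc)
  finally show ?case .
qed simp

section \<open>Runs of the program\<close>

text \<open>\<open>config_pmf n0 k\<close> is the law of the configuration \<open>c\<^sub>k\<^sub>+\<^sub>1\<close> of the paper.\<close>
definition config_pmf :: "int \<Rightarrow> nat \<Rightarrow> conf pmf" where
  "config_pmf n0 k = map_pmf last (run_prefix n0 k)"

lemma config_pmf_0: "config_pmf n0 0 = return_pmf (L0, n0)"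
  by (simp add: config_pmf_def)

lemma config_pmf_Suc: "config_pmf n0 (Suc k) = bind_pmf (config_pmf n0 k) step"
  by (simp add: config_pmf_def map_bind_pmf bind_map_pmf map_pmf_comp)

lemma set_pmf_run_prefix:
  assumes "xs \<in> set_pmf (run_prefix n0 k)"
  shows "length xs = Suc k \<and> xs ! 0 = (L0, n0) \<and> (\<forall>i<k. xs ! Suc i \<in> set_pmf (step (xs ! i)))"
  using assms
proof (induction k arbitrary: xs)
  case (Suc k)
  then obtain ys c where ys: "ys \<in> set_pmf (run_prefix n0 k)"
    and c: "c \<in> set_pmf (step (last ys))" and xs: "xs = ys @ [c]"
    by auto
  have len: "length ys = Suc k"
    using Suc.IH[OF ys] by simp
  have "last ys = ys ! k"
    using len by (subst last_conv_nth) auto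
  then show ?case
    using Suc.IH[OF ys] c len unfolding xs by (auto simp: nth_append less_Suc_eq)
qed simp

lemma set_pmf_step_Lout: "c' \<in> set_pmf (step c) \<Longrightarrow> fst c = Lout \<Longrightarrow> fst c' = Lout"
  by (cases c) auto

lemma run_prefix_Lout_absorbing:
  assumes xs: "xs \<in> set_pmf (run_prefix n0 k)" and "i \<le> j" "j \<le> k" "fst (xs ! i) = Lout"
  shows "fst (xs ! j) = Lout"
  using assms(2-4)
proof (induction j rule: dec_induct)
  case (step m)
  then have "xs ! Suc m \<in> set_pmf (step (xs ! m))"
    using set_pmf_run_prefix[OF xs] by simp
  then show ?case
    using set_pmf_step_Lout step by auto
qed simp

lemma T_prob_0: "T_prob n0 0 = 0"
  unfolding T_prob_def measure_pmf_zero_iff using set_pmf_run_prefix by fastforce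

fun exits_next :: "conf \<Rightarrow> real" where
  "exits_next (L1, n) = (if n \<le> 0 then 1 else 0)"
| "exits_next _ = 0"

lemma emeasure_set_pmf_step_Lout:
  "fst c \<noteq> Lout \<Longrightarrow> emeasure (measure_pmf (step c)) {c'. fst c' = Lout} = ennreal (exits_next c)"
  by (cases c rule: step.cases) auto

definition conf_expectation :: "(conf \<Rightarrow> real) \<Rightarrow> int \<Rightarrow> nat \<Rightarrow> ennreal" where
  "conf_expectation g n0 k = (\<integral>\<^sup>+x. ennreal (g x) \<partial>config_pmf n0 k)"

lemma T_prob_Suc: "ennreal (T_prob n0 (Suc k)) = conf_expectation exits_next n0 k"
proof -
  let ?E = "{xs. fst (xs ! Suc k) = Lout \<and> (\<forall>i<Suc k. fst (xs ! i) \<noteq> Lout)}"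
  have "ennreal (T_prob n0 (Suc k)) = emeasure (measure_pmf (run_prefix n0 (Suc k))) ?E"
    unfolding T_prob_def by (simp add: measure_pmf.emeasure_eq_measure)
  also have "\<dots> = (\<integral>\<^sup>+xs. emeasure (measure_pmf (step (last xs))) ((\<lambda>c. xs @ [c]) -` ?E) \<partial>run_prefix n0 k)"
    by simp
  also have "\<dots> = (\<integral>\<^sup>+xs. ennreal (exits_next (last xs)) \<partial>run_prefix n0 k)"
  proof (rule nn_integral_cong_AE, rule AE_pmfI)
    fix xs assume xs: "xs \<in> set_pmf (run_prefix n0 k)"
    note xs_props = set_pmf_run_prefix[OF xs]
    have last: "last xs = xs ! k"
      using xs_props by (subst last_conv_nth) auto
    have "(\<lambda>c. xs @ [c]) -` ?E = (if fst (last xs) = Lout then {} else {c. fst c = Lout})"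
    proof (cases "fst (last xs) = Lout")
      case False
      then have "\<forall>i<Suc k. fst (xs ! i) \<noteq> Lout"
        using run_prefix_Lout_absorbing[OF xs, of _ k] last less_Suc_eq_le by fastforce
      then show ?thesis
        using xs_props last False by (auto simp: nth_append)
    qed (use xs_props last in \<open>auto simp: nth_append\<close>)
    then show "emeasure (measure_pmf (step (last xs))) ((\<lambda>c. xs @ [c]) -` ?E) = ennreal (exits_next (last xs))"
      using emeasure_set_pmf_step_Lout[of "last xs"] by (cases "last xs") (auto split: loc.splits)
  qed
  finally show ?thesis
    by (simp add: conf_expectation_def config_pmf_def)
qed

section \<open>One-step expectations\<close>

fun step_mean :: "(conf \<Rightarrow> real) \<Rightarrow> conf \<Rightarrow> real" where
  "step_mean g (L0, n) = g (L1, 1)"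
| "step_mean g (L1, n) = (if n \<ge> 1 then g (L2, n) else g (Lout, n))"
| "step_mean g (L2, n) = (g (L3, n) + g (L4, n)) / 2"
| "step_mean g (L3, n) = g (L1, n + 1)"
| "step_mean g (L4, n) = g (L5, n - 1)"
| "step_mean g (L5, n) = g (L1, n - 1)"
| "step_mean g (Lout, n) = g (Lout, n)"

lemma nn_integral_step:
  assumes "\<And>x. 0 \<le> g x"
  shows "(\<integral>\<^sup>+x. ennreal (g x) \<partial>step c) = ennreal (step_mean g c)"
proof (cases c rule: step.cases)
  case (3 n)
  have "(\<integral>\<^sup>+x. ennreal (g x) \<partial>step c) = ennreal (g (L3,n)) / 2 + ennreal (g (L4,n)) / 2"
    using 3 by (simp add: divide_ennreal_def)
  also have "\<dots> = ennreal (g (L3,n) / 2 + g (L4,n) / 2)"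
    using assms by (simp add: ennreal_divide_numeral ennreal_plus)
  also have "\<dots> = ennreal (step_mean g c)"
    using 3 by (simp add: add_divide_distrib)
  finally show ?thesis .
qed simp_all

lemma step_mean_nonneg: "(\<And>x. 0 \<le> g x) \<Longrightarrow> 0 \<le> step_mean g c"
  by (cases c rule: step.cases) simp_all

lemma conf_expectation_0: "conf_expectation g n0 0 = ennreal (g (L0, n0))"
  by (simp add: conf_expectation_def config_pmf_0)

lemma conf_expectation_Suc:
  assumes "\<And>x. 0 \<le> g x"
  shows "conf_expectation g n0 (Suc k) = conf_expectation (step_mean g) n0 k"
  by (simp add: conf_expectation_def config_pmf_Suc nn_integral_step assms)

lemma conf_expectation_telescope:
  assumes g: "\<And>c. g c = f c + step_mean g c" and "\<And>c. 0 \<le> f c" "\<And>c. 0 \<le> g c"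
  shows "conf_expectation g n0 k = conf_expectation f n0 k + conf_expectation g n0 (Suc k)"
proof -
  have "ennreal (g c) = ennreal (f c) + (\<integral>\<^sup>+x. ennreal (g x) \<partial>step c)" for c
  proof -
    have "ennreal (g c) = ennreal (f c) + ennreal (step_mean g c)"
      by (subst g) (rule ennreal_plus[OF assms(2) step_mean_nonneg[OF assms(3)]])
    then show ?thesis
      by (simp add: nn_integral_step assms(3))
  qed
  then show ?thesis
    unfolding conf_expectation_def
    by (rule nn_integral_chain_telescope[where M = "config_pmf n0", OF config_pmf_Suc])
qed

lemma conf_expectation_geometric_decay:
  assumes W: "\<And>c. step_mean W c \<le> \<theta> * W c" and "0 \<le> \<theta>" "\<And>c. 0 \<le> W c"
  shows "conf_expectation W n0 k \<le> ennreal (\<theta> ^ k * W (L0, n0))"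
proof -
  have "(\<integral>\<^sup>+x. ennreal (W x) \<partial>step c) \<le> ennreal \<theta> * ennreal (W c)" for c
  proof -
    have "(\<integral>\<^sup>+x. ennreal (W x) \<partial>step c) = ennreal (step_mean W c)"
      by (rule nn_integral_step) (rule assms)
    also have "\<dots> \<le> ennreal (\<theta> * W c)"
      by (rule ennreal_leI[OF W])
    finally show ?thesis
      using assms by (simp add: ennreal_mult)
  qed
  then have "conf_expectation W n0 k \<le> ennreal \<theta> ^ k * conf_expectation W n0 0"
    unfolding conf_expectation_def
    by (rule nn_integral_chain_geometric_decay[where M = "config_pmf n0", OF config_pmf_Suc])
  then show ?thesis
    using assms by (simp add: conf_expectation_0 ennreal_power ennreal_mult)
qed

section \<open>The expected time of the loop\<close>

definition psi :: real where
  "psi = (1 - sqrt 5) / 2"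

lemma sqrt_5_bounds: "2 < sqrt (5::real)" "sqrt 5 < (3::real)"
  by (simp_all add: real_less_rsqrt real_sqrt_less_iff[of 5 9, simplified])

lemma psi_squared: "psi ^ 2 = psi + 1"
  by (simp add: psi_def power2_eq_square field_simps)

lemma psi_inverse: "inverse psi = - (1 + sqrt 5) / 2"
  using sqrt_5_bounds by (simp add: psi_def field_simps)

lemma abs_psi_le_1: "\<bar>psi\<bar> \<le> 1"
  using sqrt_5_bounds by (simp add: psi_def)

text \<open>One round of the loop takes \<open>7/2\<close> steps on average, so the expected time from \<open>(L1, n)\<close>
  solves \<open>v n = 7/2 + (v (n + 1) + v (n - 2)) / 2\<close> with \<open>v (-1) = v 0 = 0\<close>. The characteristic
  polynomial is \<open>(x - 1) (x\<^sup>2 - x - 1)\<close>, and this is the solution without the growing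
  golden-ratio term.\<close>
definition loop_time_formula :: "int \<Rightarrow> real" where
  "loop_time_formula n = 7 * of_int n + 7 * (3 - sqrt 5) / 2 * (1 - psi powi n)"

lemma loop_time_formula_rec:
  "loop_time_formula n = 7 / 2 + (loop_time_formula (n + 1) + loop_time_formula (n - 2)) / 2"
proof -
  have psi: "psi \<noteq> 0"
    using sqrt_5_bounds by (auto simp: psi_def)
  have "psi powi (n + k) = psi powi (n - 2) * psi ^ nat (k + 2)" if "k \<ge> -2" for k
  proof -
    have "psi powi (n + k) = psi powi (n - 2 + (k + 2))"
      by simp
    also have "\<dots> = psi powi (n - 2) * psi powi (k + 2)"
      using psi by (rule power_int_add[OF disjI1])
    finally show ?thesis
      using that by (simp add: power_int_def)
  qed
  from this[of 1] this[of 0] have split: "psi powi (n + 1) = psi powi (n - 2) * psi ^ 3"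
    "psi powi n = psi powi (n - 2) * psi ^ 2"
    by simp_all
  have cube: "psi ^ 3 = 2 * psi ^ 2 - 1"
    using psi_squared by (simp add: power3_eq_cube power2_eq_square algebra_simps)
  show ?thesis
    unfolding loop_time_formula_def split cube by (simp add: field_simps)
qed

lemma loop_time_formula_boundary: "loop_time_formula 0 = 0" "loop_time_formula (-1) = 0"
proof -
  have "7 * (3 - sqrt 5) / 2 * (1 - inverse psi) = 7"
    unfolding psi_inverse by (simp add: field_simps)
  then show "loop_time_formula (-1) = 0"
    by (simp add: loop_time_formula_def power_int_minus)
qed (simp add: loop_time_formula_def)

definition loop_time :: "int \<Rightarrow> real" where
  "loop_time n = (if n \<le> 0 then 0 else loop_time_formula n)"

lemma loop_time_eq_formula:
  assumes "-1 \<le> n"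
  shows "loop_time n = loop_time_formula n"
proof (cases "n \<le> 0")
  case True
  then have "n = 0 \<or> n = -1"
    using assms by linarith
  then show ?thesis
    using loop_time_formula_boundary by (auto simp: loop_time_def)
qed (simp add: loop_time_def)

lemma loop_time_rec:
  "1 \<le> n \<Longrightarrow> loop_time n = 7 / 2 + (loop_time (n + 1) + loop_time (n - 2)) / 2"
  using loop_time_formula_rec[of n] by (simp add: loop_time_eq_formula)

lemma loop_time_1: "loop_time 1 = 7 * (1 + sqrt 5) / 2"
  by (simp add: loop_time_def loop_time_formula_def psi_def field_simps)

lemma loop_time_bounds: "0 \<le> loop_time n \<and> loop_time n \<le> 7 * real (nat (n + 1))"
proof (cases "n \<le> 0")
  case False
  let ?a = "7 * (3 - sqrt 5) / 2"
  have "\<bar>psi powi n\<bar> \<le> 1"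
    using False abs_psi_le_1 by (simp add: power_int_abs power_int_le_one)
  then have "0 \<le> 1 - psi powi n" "1 - psi powi n \<le> 2"
    by linarith+
  moreover have "0 \<le> ?a" "?a \<le> 7 / 2"
    using sqrt_5_bounds by simp_all
  ultimately have "0 \<le> ?a * (1 - psi powi n)" "?a * (1 - psi powi n) \<le> 7 / 2 * 2"
    by (simp, intro mult_mono) simp_all
  then show ?thesis
    using False by (simp add: loop_time_def loop_time_formula_def)
qed (simp add: loop_time_def)

definition loop_weight :: "int \<Rightarrow> real" where
  "loop_weight n = (6 / 5) ^ nat (n + 1)"

lemma one_le_loop_weight: "1 \<le> loop_weight n"
  by (simp add: loop_weight_def)

lemma loop_time_le_loop_weight: "loop_time n \<le> 35 * loop_weight n"
proof -
  have "1 + real (nat (n + 1)) * (1 / 5) \<le> (1 + 1 / 5 :: real) ^ nat (n + 1)"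
    by (rule Bernoulli_inequality) simp
  then show ?thesis
    using loop_time_bounds[of n] by (simp add: loop_weight_def)
qed

section \<open>Potentials on configurations\<close>

definition alive :: "conf \<Rightarrow> real" where
  "alive c = (if fst c = Lout then 0 else 1)"

lemma alive_step_mean: "alive c = exits_next c + step_mean alive c"
  by (cases c rule: step.cases) (simp_all add: alive_def)

text \<open>The expected number of non-terminal configurations strictly after \<open>c\<close> in a run from \<open>c\<close>.\<close>
fun remaining_time :: "conf \<Rightarrow> real" where
  "remaining_time (L0, n) = 1 + loop_time 1"
| "remaining_time (L1, n) = loop_time n"
| "remaining_time (L2, n) = 1 + (3 + loop_time (n + 1) + loop_time (n - 2)) / 2"
| "remaining_time (L3, n) = 1 + loop_time (n + 1)"
| "remaining_time (L4, n) = 2 + loop_time (n - 2)"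
| "remaining_time (L5, n) = 1 + loop_time (n - 1)"
| "remaining_time (Lout, n) = 0"

lemma remaining_time_nonneg: "0 \<le> remaining_time c"
  using loop_time_bounds by (cases c rule: remaining_time.cases) (auto intro: add_nonneg_nonneg)

lemma remaining_time_step_mean: "remaining_time c = step_mean alive c + step_mean remaining_time c"
proof (cases c rule: step.cases)
  case (2 n)
  show ?thesis
  proof (cases "1 \<le> n")
    case True
    then show ?thesis
      using 2 loop_time_rec[OF True] by (simp add: alive_def field_simps)
  qed (use 2 in \<open>simp add: alive_def loop_time_def\<close>)
qed (simp_all add: alive_def field_simps)

text \<open>Off the loop head every weight is \<open>100/99\<close> times the weight expected after one step, so
  the contraction by \<open>99/100\<close> is an inequality only at \<open>L1\<close>, where it is the numerical fact
  \<open>(6/5)\<^sup>3 (100/99)\<^sup>2 + (100/99)\<^sup>3 \<le> 2 (99/100) (6/5)\<^sup>2\<close>.\<close>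
fun lyapunov :: "conf \<Rightarrow> real" where
  "lyapunov (L0, n) = 100 / 99 * loop_weight 1"
| "lyapunov (L1, n) = loop_weight n"
| "lyapunov (L2, n) = 50 / 99 * (100 / 99 * loop_weight (n + 1) + (100 / 99) ^ 2 * loop_weight (n - 2))"
| "lyapunov (L3, n) = 100 / 99 * loop_weight (n + 1)"
| "lyapunov (L4, n) = (100 / 99) ^ 2 * loop_weight (n - 2)"
| "lyapunov (L5, n) = 100 / 99 * loop_weight (n - 1)"
| "lyapunov (Lout, n) = 0"

lemma alive_le_lyapunov: "alive c \<le> lyapunov c"
  using one_le_loop_weight[of 1] one_le_loop_weight[of "snd c"] one_le_loop_weight[of "snd c + 1"]
    one_le_loop_weight[of "snd c - 1"] one_le_loop_weight[of "snd c - 2"]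
  by (cases c rule: lyapunov.cases) (simp_all add: alive_def power2_eq_square)

lemma lyapunov_nonneg: "0 \<le> lyapunov c"
  using alive_le_lyapunov[of c] by (simp add: alive_def split: if_splits)

lemma remaining_time_le_lyapunov: "remaining_time c \<le> 40 * lyapunov c"
  using loop_time_le_loop_weight[of 1] loop_time_le_loop_weight[of "snd c"]
    loop_time_le_loop_weight[of "snd c + 1"] loop_time_le_loop_weight[of "snd c - 1"]
    loop_time_le_loop_weight[of "snd c - 2"] one_le_loop_weight[of 1] one_le_loop_weight[of "snd c"]
    one_le_loop_weight[of "snd c + 1"] one_le_loop_weight[of "snd c - 1"] one_le_loop_weight[of "snd c - 2"]
  by (cases c rule: lyapunov.cases) (simp_all add: power2_eq_square field_simps)

lemma lyapunov_contraction: "step_mean lyapunov c \<le> 99 / 100 * lyapunov c"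
proof (cases c rule: step.cases)
  case (2 n)
  show ?thesis
  proof (cases "1 \<le> n")
    case True
    define w where "w = loop_weight (n - 2)"
    have "nat (n + 1 + 1) = 3 + nat (n - 2 + 1)" "nat (n + 1) = 2 + nat (n - 2 + 1)"
      using True by simp_all
    then have "loop_weight (n + 1) = (6 / 5) ^ 3 * w" "loop_weight n = (6 / 5) ^ 2 * w"
      unfolding w_def loop_weight_def by (simp_all only: power_add)
    moreover have "0 \<le> w"
      using one_le_loop_weight[of "n - 2"] by (simp add: w_def)
    ultimately show ?thesis
      using 2 True by (simp add: w_def[symmetric] power2_eq_square power3_eq_cube)
  qed (use 2 one_le_loop_weight[of n] in simp)
qed (simp_all add: field_simps)

section \<open>Termination probability and expected termination time\<close>

lemma exits_next_nonneg: "0 \<le> exits_next c"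
  by (cases c rule: exits_next.cases) simp_all

lemma conf_expectation_mono:
  "(\<And>c. f c \<le> g c) \<Longrightarrow> conf_expectation f n0 k \<le> conf_expectation g n0 k"
  unfolding conf_expectation_def by (intro nn_integral_mono ennreal_leI)

lemma conf_expectation_alive_step:
  "conf_expectation alive n0 k = conf_expectation exits_next n0 k + conf_expectation alive n0 (Suc k)"
  by (rule conf_expectation_telescope[OF alive_step_mean exits_next_nonneg]) (simp add: alive_def)

lemma conf_expectation_remaining_time_step:
  "conf_expectation remaining_time n0 k
     = conf_expectation alive n0 (Suc k) + conf_expectation remaining_time n0 (Suc k)"
proof -
  have alive_nonneg: "0 \<le> alive c" for c
    by (simp add: alive_def)
  have "conf_expectation remaining_time n0 k
      = conf_expectation (step_mean alive) n0 k + conf_expectation remaining_time n0 (Suc k)"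
    by (rule conf_expectation_telescope[OF remaining_time_step_mean])
      (simp_all add: step_mean_nonneg alive_nonneg remaining_time_nonneg)
  then show ?thesis
    by (simp add: conf_expectation_Suc alive_nonneg)
qed

lemma conf_expectation_lyapunov_decay:
  "conf_expectation lyapunov n0 N \<le> ennreal ((99 / 100) ^ N * lyapunov (L0, n0))"
  by (rule conf_expectation_geometric_decay[OF lyapunov_contraction]) (simp_all add: lyapunov_nonneg)

lemma conf_expectation_alive_tendsto_0: "conf_expectation alive n0 \<longlonglongrightarrow> 0"
proof (rule tendsto_0_if_le_ennreal)
  show "conf_expectation alive n0 N \<le> ennreal ((99 / 100) ^ N * lyapunov (L0, n0))" for N
    using conf_expectation_mono[OF alive_le_lyapunov] conf_expectation_lyapunov_decay
    by (rule order.trans)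
  show "(\<lambda>N. (99 / 100) ^ N * lyapunov (L0, n0)) \<longlonglongrightarrow> 0"
    by real_asymp
qed

lemma expected_time_remainder_tendsto_0:
  "(\<lambda>N. (of_nat N + 2) * conf_expectation alive n0 N + conf_expectation remaining_time n0 N)
     \<longlonglongrightarrow> 0"
proof (rule tendsto_0_if_le_ennreal)
  let ?w = "lyapunov (L0, n0)"
  fix N
  let ?D = "conf_expectation lyapunov n0 N"
  have "conf_expectation remaining_time n0 N \<le> conf_expectation (\<lambda>c. 40 * lyapunov c) n0 N"
    by (rule conf_expectation_mono[OF remaining_time_le_lyapunov])
  also have "\<dots> = 40 * ?D"
    unfolding conf_expectation_def using lyapunov_nonneg
    by (simp add: ennreal_mult nn_integral_cmult)
  finally have "(of_nat N + 2) * conf_expectation alive n0 N + conf_expectation remaining_time n0 N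
      \<le> (of_nat N + 2) * ?D + 40 * ?D"
    by (intro add_mono mult_left_mono conf_expectation_mono[OF alive_le_lyapunov]) simp_all
  also have "\<dots> = (of_nat N + 2 + 40) * ?D"
    by (rule distrib_right[symmetric])
  also have "\<dots> = (of_nat N + 42) * ?D"
    by (simp add: add.assoc)
  also have "\<dots> \<le> (of_nat N + 42) * ennreal ((99 / 100) ^ N * ?w)"
    by (intro mult_left_mono conf_expectation_lyapunov_decay) simp
  also have "\<dots> = ennreal (real N + 42) * ennreal ((99 / 100) ^ N * ?w)"
    by (simp add: ennreal_of_nat_eq_real_of_nat ennreal_plus)
  also have "\<dots> = ennreal ((real N + 42) * ((99 / 100) ^ N * ?w))"
    by (rule ennreal_mult'[symmetric]) simp
  finally show "(of_nat N + 2) * conf_expectation alive n0 N + conf_expectation remaining_time n0 N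
      \<le> ennreal ((real N + 42) * ((99 / 100) ^ N * ?w))" .
  show "(\<lambda>N. (real N + 42) * ((99 / 100) ^ N * ?w)) \<longlonglongrightarrow> 0"
    by real_asymp
qed

lemma suminf_shift_ennreal: "f 0 = 0 \<Longrightarrow> (\<Sum>k. f k :: ennreal) = (\<Sum>k. f (Suc k))"
  using suminf_offset[of f 1] by simp

lemma suminf_T_prob: "(\<Sum>k. ennreal (T_prob n0 k)) = 1"
proof -
  have partial_sums: "(\<Sum>j<N. ennreal (T_prob n0 (Suc j))) + conf_expectation alive n0 N = 1" for N
    using sum_telescope_ennreal[where G = "conf_expectation alive n0", OF conf_expectation_alive_step]
    by (simp add: T_prob_Suc conf_expectation_0 alive_def)
  have "(\<Sum>k. ennreal (T_prob n0 k)) = (\<Sum>k. ennreal (T_prob n0 (Suc k)))"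
    by (rule suminf_shift_ennreal) (simp add: T_prob_0)
  also have "\<dots> = 1"
    by (rule suminf_eq_if_remainder_tendsto_0[OF partial_sums conf_expectation_alive_tendsto_0])
  finally show ?thesis .
qed

lemma suminf_weighted_T_prob:
  "(\<Sum>k. ennreal (real (Suc k) * T_prob n0 k)) = 2 + ennreal (remaining_time (L0, n0))"
proof -
  have weight: "ennreal (real (Suc (Suc j)) * T_prob n0 (Suc j))
      = (of_nat j + 2) * conf_expectation exits_next n0 j" for j
    by (simp add: ennreal_mult' ennreal_of_nat_eq_real_of_nat T_prob_Suc[symmetric] add.commute)
  have partial_sums: "(\<Sum>j<N. ennreal (real (Suc (Suc j)) * T_prob n0 (Suc j)))
      + ((of_nat N + 2) * conf_expectation alive n0 N + conf_expectation remaining_time n0 N)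
      = 2 + ennreal (remaining_time (L0, n0))" for N
    unfolding weight
    using weighted_sum_telescope_ennreal[where G = "conf_expectation alive n0"
        and H = "conf_expectation remaining_time n0", OF conf_expectation_alive_step
        conf_expectation_remaining_time_step, where a = 2]
    by (simp add: conf_expectation_0 alive_def)
  have "(\<Sum>k. ennreal (real (Suc k) * T_prob n0 k))
      = (\<Sum>k. ennreal (real (Suc (Suc k)) * T_prob n0 (Suc k)))"
    by (rule suminf_shift_ennreal) (simp add: T_prob_0)
  also have "\<dots> = 2 + ennreal (remaining_time (L0, n0))"
    by (rule suminf_eq_if_remainder_tendsto_0[OF partial_sums expected_time_remainder_tendsto_0])
  finally show ?thesis .
qed

lemma ET_eq: "ET n0 = ennreal ((13 + 7 * sqrt 5) / 2)"
proof -
  have "ET n0 = 2 + ennreal (remaining_time (L0, n0))"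
    unfolding ET_def suminf_T_prob suminf_weighted_T_prob by simp
  also have "\<dots> = ennreal (2 + remaining_time (L0, n0))"
    using remaining_time_nonneg[of "(L0, n0)"] by (subst ennreal_plus) simp_all
  also have "2 + remaining_time (L0, n0) = (13 + 7 * sqrt 5) / 2"
    by (simp add: loop_time_1 field_simps)
  finally show ?thesis .
qed

lemma sqrt_prime_not_rat:
  assumes p: "prime (p::nat)"
  shows "sqrt (real p) \<notin> \<rat>"
proof
  assume "sqrt (real p) \<in> \<rat>"
  then obtain m n :: nat where n: "n \<noteq> 0" and sq: "\<bar>sqrt (real p)\<bar> = real m / real n"
    and cop: "coprime m n"
    by (rule Rats_abs_nat_div_natE)
  have "real m = sqrt (real p) * real n"
    using sq n by (simp add: field_simps)
  then have "real (m ^ 2) = real (p * n ^ 2)"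
    by (simp add: power_mult_distrib)
  then have eq: "m ^ 2 = p * n ^ 2"
    by (rule of_nat_eq_iff[THEN iffD1])
  then have "p dvd m"
    using p prime_dvd_power by (metis dvd_triv_left)
  then obtain k where "m = p * k" ..
  with eq p have "n ^ 2 = p * k ^ 2"
    by (simp add: power2_eq_square algebra_simps)
  then have "p dvd n"
    using p prime_dvd_power by (metis dvd_triv_left)
  with \<open>p dvd m\<close> cop p show False
    by (metis coprime_common_divisor_nat not_prime_1)
qed

lemma expected_time_not_rat: "(13 + 7 * sqrt 5) / 2 \<notin> \<rat>"
proof
  assume r: "(13 + 7 * sqrt 5) / 2 \<in> \<rat>"
  have "sqrt (real 5) = (2 * ((13 + 7 * sqrt 5) / 2) - 13) / 7"
    by (simp add: field_simps)
  also have "\<dots> \<in> \<rat>"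
    by (intro Rats_divide Rats_diff Rats_mult r) simp_all
  finally show False
    using sqrt_prime_not_rat[of 5] by simp
qed

theorem mainTheorem13:
  fixes n0 :: int
  shows "terminates_as n0 \<and> (\<exists>r::real. ET n0 = ennreal r \<and> r \<notin> \<rat>)"
  using suminf_T_prob ET_eq expected_time_not_rat by (auto simp: terminates_as_def)

end
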